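(* For every propositional Hilbert-type calculus $\mathbf{C}$, its many-valued closure $\mathrm{MC}(\mathbf{C})$ has an effective sequential approximation.
   Context: A propositional language $\mathcal{L}$ has variables $X_1,X_2,\ldots$ and finitely many connectives with arities. A propositional Hilbert-type calculus $\mathbf{C}$ is given by a finite set of axioms (formulas) and a finite set of rules (premises $A_1,\ldots,A_n$, conclusion $C$). A finite-valued logic $\mathbf{M}$ is given by a finite set $V(\mathbf{M})$ of truth values, designated values $V^+(\mathbf{M})\subseteq V(\mathbf{M})$, and a truth function for each connective; valuations map variables to truth values and extend to formulas; a valuation satisfies $F$ if $F$ gets a designated value; a tautology is a formula satisfied by every valuation; $\mathrm{Taut}(\mathbf{M})$ is the set of tautologies; $\mathbf{M}_1\unlhd\mathbf{M}_2$ means $\mathrm{Taut}(\mathbf{M}_1)\subseteq\mathrm{Taut}(\mathbf{M}_2)$. $\mathbf{M}$ is a cover for $\mathbf{C}$ if all axioms of $\mathbf{C}$ are tautologies of $\mathbf{M}$ and for every rule every valuation satisfying all premises satisfies the conclusion. The many-valued closure $\mathrm{MC}(\mathbf{C})$ is the set of formulas that are tautologies of every finite-valued cover of $\mathbf{C}$. For a set $\mathbf{L}$ of formulas, a sequential approximation of $\mathbf{L}$ is a sequence $\langle\mathbf{M}_1,\mathbf{M}_2,\ldots\rangle$ of finite-valued logics over $\mathcal{L}$ with $\mathbf{M}_i\unlhd\mathbf{M}_j$ whenever $i\ge j$ and $\mathbf{L}=\bigcap_j\mathrm{Taut}(\mathbf{M}_j)$; it is effective if the sequence is effectively enumerated.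 *)

theory Defs
  imports Main "HOL-Library.Nat_Bijection"
begin

text \<open>A language is given by a list of arities: connective k (k < length ar)
  has arity ar ! k. Variables are X_0, X_1, ... (indexed by nat).\<close>

datatype form = Var nat | Op nat "form list"

fun wf_form :: "nat list \<Rightarrow> form \<Rightarrow> bool" where
  "wf_form ar (Var x) = True"
| "wf_form ar (Op k args) =
     (k < length ar \<and> length args = ar ! k \<and> (\<forall>a\<in>set args. wf_form ar a))"

definition formulas :: "nat list \<Rightarrow> form set" where
  "formulas ar = {F. wf_form ar F}"

record calculus =
  axioms :: "form list"
  rules :: "(form list \<times> form) list"

definition wf_calculus :: "nat list \<Rightarrow> calculus \<Rightarrow> bool" where
  "wf_calculus ar C \<longleftrightarrow>
     (\<forall>A\<in>set (axioms C). wf_form ar A) \<and>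
     (\<forall>(ps, c)\<in>set (rules C). (\<forall>p\<in>set ps. wf_form ar p) \<and> wf_form ar c)"

record fvlogic =
  nv :: nat
  des :: "nat set"
  tfun :: "nat \<Rightarrow> nat list \<Rightarrow> nat"

definition wf_logic :: "nat list \<Rightarrow> fvlogic \<Rightarrow> bool" where
  "wf_logic ar M \<longleftrightarrow> 0 < nv M \<and> des M \<subseteq> {0..<nv M} \<and>
     (\<forall>k < length ar. \<forall>xs. length xs = ar ! k \<and> set xs \<subseteq> {0..<nv M}
        \<longrightarrow> tfun M k xs < nv M)"

definition valuation :: "fvlogic \<Rightarrow> (nat \<Rightarrow> nat) \<Rightarrow> bool" where
  "valuation M v \<longleftrightarrow> (\<forall>x. v x < nv M)"

fun eval :: "fvlogic \<Rightarrow> (nat \<Rightarrow> nat) \<Rightarrow> form \<Rightarrow> nat" where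
  "eval M v (Var x) = v x"
| "eval M v (Op k args) = tfun M k (map (eval M v) args)"

definition satisfies :: "fvlogic \<Rightarrow> (nat \<Rightarrow> nat) \<Rightarrow> form \<Rightarrow> bool" where
  "satisfies M v F \<longleftrightarrow> eval M v F \<in> des M"

definition Taut :: "nat list \<Rightarrow> fvlogic \<Rightarrow> form set" where
  "Taut ar M = {F \<in> formulas ar. \<forall>v. valuation M v \<longrightarrow> satisfies M v F}"

definition is_cover :: "nat list \<Rightarrow> fvlogic \<Rightarrow> calculus \<Rightarrow> bool" where
  "is_cover ar M C \<longleftrightarrow>
     (\<forall>A\<in>set (axioms C). A \<in> Taut ar M) \<and>
     (\<forall>(ps, c)\<in>set (rules C). \<forall>v. valuation M v \<longrightarrow>
         (\<forall>p\<in>set ps. satisfies M v p) \<longrightarrow> satisfies M v c)"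

definition MC :: "nat list \<Rightarrow> calculus \<Rightarrow> form set" where
  "MC ar C = {F \<in> formulas ar. \<forall>M. wf_logic ar M \<and> is_cover ar M C \<longrightarrow> F \<in> Taut ar M}"

definition seq_approx :: "nat list \<Rightarrow> form set \<Rightarrow> (nat \<Rightarrow> fvlogic) \<Rightarrow> bool" where
  "seq_approx ar L Ms \<longleftrightarrow>
     (\<forall>i. wf_logic ar (Ms i)) \<and>
     (\<forall>i j. j \<le> i \<longrightarrow> Taut ar (Ms i) \<subseteq> Taut ar (Ms j)) \<and>
     L = (\<Inter>j. Taut ar (Ms j))"

datatype recf = Zero | Succ | Proj nat | Comp recf "recf list" | Prec recf recf | Mn recf

inductive rec_eval :: "recf \<Rightarrow> nat list \<Rightarrow> nat \<Rightarrow> bool" where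
  "rec_eval Zero xs 0"
| "rec_eval Succ (x # xs) (Suc x)"
| "i < length xs \<Longrightarrow> rec_eval (Proj i) xs (xs ! i)"
| "list_all2 (\<lambda>g y. rec_eval g xs y) gs ys \<Longrightarrow> rec_eval f ys z \<Longrightarrow> rec_eval (Comp f gs) xs z"
| "rec_eval f xs z \<Longrightarrow> rec_eval (Prec f g) (0 # xs) z"
| "rec_eval (Prec f g) (n # xs) r \<Longrightarrow> rec_eval g (r # n # xs) z \<Longrightarrow>
     rec_eval (Prec f g) (Suc n # xs) z"
| "rec_eval f (n # xs) 0 \<Longrightarrow> (\<forall>m<n. \<exists>y. y \<noteq> 0 \<and> rec_eval f (m # xs) y) \<Longrightarrow>
     rec_eval (Mn f) xs n"

fun tuples :: "nat \<Rightarrow> nat \<Rightarrow> nat list list" where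
  "tuples n 0 = [[]]"
| "tuples n (Suc m) = concat (map (\<lambda>v. map (Cons v) (tuples n m)) [0..<n])"

definition logic_code :: "nat list \<Rightarrow> fvlogic \<Rightarrow> nat" where
  "logic_code ar M = list_encode
     (nv M # map (\<lambda>v. if v \<in> des M then 1 else 0) [0..<nv M] @
      concat (map (\<lambda>k. map (tfun M k) (tuples (nv M) (ar ! k))) [0..<length ar]))"

definition effective_seq :: "nat list \<Rightarrow> (nat \<Rightarrow> fvlogic) \<Rightarrow> bool" where
  "effective_seq ar Ms \<longleftrightarrow> (\<exists>f. \<forall>i. rec_eval f [i] (logic_code ar (Ms i)))"

end

(* Enumerate all finite-valued logics by natural numbers and replace each one that is not
   a cover of C by a variant in which every value is designated; the tautologies of the
   resulting covers intersect to MC(C). The i-th approximation is the direct product of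
   the first i covers: a product has exactly the tautologies common to its factors, so
   these sets decrease to MC(C). Whether a logic is a cover depends only on valuations of
   the finitely many variables occurring in C, hence is decidable; so the truth tables of
   the i-th product, and with them its code, are computable from i by a mu-recursive
   function. *)

theory Submission
  imports Defs
begin

section \<open>Total recursive functions\<close>

definition recursive :: "nat \<Rightarrow> (nat list \<Rightarrow> nat) \<Rightarrow> bool" where
  "recursive n g \<longleftrightarrow> (\<exists>f. \<forall>xs. length xs = n \<longrightarrow> rec_eval f xs (g xs))"

lemma recursive_cong:
  "recursive m g \<Longrightarrow> m = n \<Longrightarrow> (\<And>xs. length xs = n \<Longrightarrow> g xs = g' xs) \<Longrightarrow> recursive n g'"
  unfolding recursive_def by metis

lemma recursive_proj: "i < n \<Longrightarrow> recursive n (\<lambda>xs. xs ! i)"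
  unfolding recursive_def by (auto intro!: exI[of _ "Proj i"] rec_eval.intros(3))

lemma recursive_comp:
  assumes h: "recursive m h" and gs: "\<forall>j<m. recursive n (gs j)"
  shows "recursive n (\<lambda>xs. h (map (\<lambda>j. gs j xs) [0..<m]))"
proof -
  obtain fh where fh: "\<forall>ys. length ys = m \<longrightarrow> rec_eval fh ys (h ys)"
    using h unfolding recursive_def by blast
  obtain F where F: "\<forall>j<m. \<forall>xs. length xs = n \<longrightarrow> rec_eval (F j) xs (gs j xs)"
    using gs unfolding recursive_def by metis
  show ?thesis unfolding recursive_def
  proof (intro exI allI impI)
    fix xs :: "nat list" assume "length xs = n"
    then have "list_all2 (\<lambda>g y. rec_eval g xs y) (map F [0..<m]) (map (\<lambda>j. gs j xs) [0..<m])"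
      using F by (auto simp: list_all2_conv_all_nth)
    with fh show "rec_eval (Comp fh (map F [0..<m])) xs (h (map (\<lambda>j. gs j xs) [0..<m]))"
      by (auto intro: rec_eval.intros(4))
  qed
qed

lemma recursive_comp1:
  "recursive 1 (\<lambda>ys. h (ys ! 0)) \<Longrightarrow> recursive n g \<Longrightarrow> recursive n (\<lambda>xs. h (g xs))"
  using recursive_comp[of 1 "\<lambda>ys. h (ys ! 0)" n "\<lambda>_. g"] by simp

lemma recursive_comp2:
  "recursive 2 (\<lambda>ys. h (ys ! 0) (ys ! 1)) \<Longrightarrow> recursive n f \<Longrightarrow> recursive n g \<Longrightarrow>
    recursive n (\<lambda>xs. h (f xs) (g xs))"
  using recursive_comp[of 2 "\<lambda>ys. h (ys ! 0) (ys ! 1)" n "\<lambda>j. if j = 0 then f else g"]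
  by (simp add: upt_rec)

lemma recursive_Suc: "recursive n g \<Longrightarrow> recursive n (\<lambda>xs. Suc (g xs))"
proof -
  have "recursive 1 (\<lambda>ys. Suc (ys ! 0))" unfolding recursive_def
    by (rule exI[of _ Succ]) (auto simp: length_Suc_conv intro: rec_eval.intros(2))
  then show "recursive n g \<Longrightarrow> ?thesis" by (rule recursive_comp1)
qed

lemma recursive_const: "recursive n (\<lambda>xs. c)"
proof (induction c)
  case 0
  show ?case unfolding recursive_def by (auto intro!: exI[of _ Zero] rec_eval.intros(1))
qed (rule recursive_Suc)

lemma recursive_rec_nat:
  assumes g: "recursive n g" and h: "recursive (Suc (Suc n)) h"
  shows "recursive (Suc n) (\<lambda>xs. rec_nat (g (tl xs)) (\<lambda>k r. h (r # k # tl xs)) (hd xs))"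
proof -
  obtain fg where fg: "\<forall>ys. length ys = n \<longrightarrow> rec_eval fg ys (g ys)"
    using g unfolding recursive_def by blast
  obtain fh where fh: "\<forall>ys. length ys = Suc (Suc n) \<longrightarrow> rec_eval fh ys (h ys)"
    using h unfolding recursive_def by blast
  have Prec: "rec_eval (Prec fg fh) (y # ys) (rec_nat (g ys) (\<lambda>k r. h (r # k # ys)) y)"
    if "length ys = n" for y ys
  proof (induction y)
    case 0
    then show ?case using fg that by (simp add: rec_eval.intros(5))
  next
    case (Suc y)
    then show ?case using fh that by (auto intro: rec_eval.intros(6))
  qed
  show ?thesis unfolding recursive_def
  proof (intro exI[of _ "Prec fg fh"] allI impI)
    fix xs :: "nat list" assume "length xs = Suc n"
    then show "rec_eval (Prec fg fh) xs (rec_nat (g (tl xs)) (\<lambda>k r. h (r # k # tl xs)) (hd xs))"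
      using Prec by (cases xs) auto
  qed
qed

lemma recursive_Least:
  assumes g: "recursive (Suc n) g" and ex: "\<And>xs. length xs = n \<Longrightarrow> \<exists>y. g (y # xs) = 0"
  shows "recursive n (\<lambda>xs. LEAST y. g (y # xs) = 0)"
proof -
  obtain fg where fg: "\<forall>ys. length ys = Suc n \<longrightarrow> rec_eval fg ys (g ys)"
    using g unfolding recursive_def by blast
  show ?thesis unfolding recursive_def
  proof (intro exI allI impI)
    fix xs :: "nat list" assume len: "length xs = n"
    define y where "y = (LEAST y. g (y # xs) = 0)"
    have "g (y # xs) = 0" unfolding y_def using ex[OF len] by (rule LeastI_ex)
    then have zero: "rec_eval fg (y # xs) 0" using fg len by (metis length_Cons)
    have "\<forall>m<y. g (m # xs) \<noteq> 0" unfolding y_def using not_less_Least by blast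
    then have nonzero: "\<forall>m<y. \<exists>z. z \<noteq> 0 \<and> rec_eval fg (m # xs) z"
      using fg len by (metis length_Cons)
    show "rec_eval (Mn fg) xs y" using rec_eval.intros(7)[OF zero nonzero] .
  qed
qed

lemma recursive_plus: "recursive 2 (\<lambda>ys. ys ! 0 + ys ! 1)"
proof -
  have "recursive 2 (\<lambda>xs. rec_nat (xs ! 1) (\<lambda>k r. Suc r) (xs ! 0))"
    by (rule recursive_cong[OF recursive_rec_nat[of 1 "\<lambda>ys. ys ! 0" "\<lambda>ys. Suc (ys ! 0)"]])
      (auto intro: recursive_proj recursive_Suc simp: length_Suc_conv numeral_2_eq_2)
  moreover have "rec_nat b (\<lambda>k r. Suc r) a = a + b" for a b :: nat by (induction a) auto
  ultimately show ?thesis by simp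
qed

lemma recursive_add: "recursive n f \<Longrightarrow> recursive n g \<Longrightarrow> recursive n (\<lambda>xs. f xs + g xs)"
  using recursive_comp2[OF recursive_plus] .

lemma recursive_times: "recursive 2 (\<lambda>ys. ys ! 0 * ys ! 1)"
proof -
  have "recursive 2 (\<lambda>xs. rec_nat 0 (\<lambda>k r. r + xs ! 1) (xs ! 0))"
    by (rule recursive_cong[OF recursive_rec_nat[of 1 "\<lambda>ys. 0" "\<lambda>ys. ys ! 0 + ys ! 2"]])
      (auto intro: recursive_proj recursive_add recursive_const
        simp: length_Suc_conv numeral_2_eq_2)
  moreover have "rec_nat 0 (\<lambda>k r. r + b) a = a * b" for a b :: nat by (induction a) auto
  ultimately show ?thesis by simp
qed

lemma recursive_mult: "recursive n f \<Longrightarrow> recursive n g \<Longrightarrow> recursive n (\<lambda>xs. f xs * g xs)"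
  using recursive_comp2[OF recursive_times] .

lemma recursive_pred: "recursive 1 (\<lambda>ys. ys ! 0 - 1)"
proof -
  have "recursive 1 (\<lambda>xs. rec_nat 0 (\<lambda>k r. k) (xs ! 0))"
    by (rule recursive_cong[OF recursive_rec_nat[of 0 "\<lambda>ys. 0" "\<lambda>ys. ys ! 1"]])
      (auto intro: recursive_proj recursive_const simp: length_Suc_conv)
  moreover have "rec_nat 0 (\<lambda>k r. k) a = a - 1" for a :: nat by (induction a) auto
  ultimately show ?thesis by simp
qed

lemma recursive_minus: "recursive 2 (\<lambda>ys. ys ! 0 - ys ! 1)"
proof -
  \<comment> \<open>Primitive recursion runs over the first argument, so the subtrahend is put first.\<close>
  have base: "recursive 1 (\<lambda>ys. ys ! 0)" by (rule recursive_proj) simp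
  have step: "recursive (Suc (Suc 1)) (\<lambda>ys. ys ! 0 - 1)"
    by (rule recursive_comp1[OF recursive_pred recursive_proj]) simp
  from recursive_rec_nat[OF base step]
  have "recursive 2 (\<lambda>xs. rec_nat (xs ! 1) (\<lambda>k r. r - 1) (xs ! 0))"
    by (rule recursive_cong) (auto simp: length_Suc_conv numeral_2_eq_2)
  then have "recursive 2 (\<lambda>xs. rec_nat (xs ! 0) (\<lambda>k r. r - 1) (xs ! 1))"
    by (rule recursive_comp2[where h="\<lambda>a b. rec_nat b (\<lambda>k r. r - 1) a"])
      (auto intro: recursive_proj)
  moreover have "rec_nat a (\<lambda>k r. r - 1) b = a - b" for a b :: nat by (induction b) auto
  ultimately show ?thesis by simp
qed

lemma recursive_diff: "recursive n f \<Longrightarrow> recursive n g \<Longrightarrow> recursive n (\<lambda>xs. f xs - g xs)"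
  using recursive_comp2[OF recursive_minus] .

lemma recursive_triangle: "recursive n f \<Longrightarrow> recursive n (\<lambda>xs. triangle (f xs))"
proof -
  have "recursive (Suc (Suc 0)) (\<lambda>ys. ys ! 0 + Suc (ys ! 1))"
    by (intro recursive_add recursive_Suc recursive_proj) simp_all
  then have "recursive 1 (\<lambda>xs. rec_nat 0 (\<lambda>k r. r + Suc k) (xs ! 0))"
    by (rule recursive_cong[OF recursive_rec_nat[OF recursive_const[of 0 0]]])
      (auto simp: length_Suc_conv)
  moreover have "rec_nat 0 (\<lambda>k r. r + Suc k) a = triangle a" for a :: nat by (induction a) auto
  ultimately show "recursive n f \<Longrightarrow> ?thesis" by (simp add: recursive_comp1)
qed

lemma recursive_prod_encode:
  "recursive n f \<Longrightarrow> recursive n g \<Longrightarrow> recursive n (\<lambda>xs. prod_encode (f xs, g xs))"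
  unfolding prod_encode_def by (simp add: recursive_add recursive_triangle)

lemma triangle_mono: "m \<le> n \<Longrightarrow> triangle m \<le> triangle n"
  unfolding triangle_def by (intro div_le_mono mult_le_mono) auto

definition fst_decode :: "nat \<Rightarrow> nat" where
  "fst_decode p = fst (prod_decode p)"

definition snd_decode :: "nat \<Rightarrow> nat" where
  "snd_decode p = snd (prod_decode p)"

lemma fst_decode_prod_encode [simp]: "fst_decode (prod_encode (a, b)) = a"
  by (simp add: fst_decode_def)

lemma snd_decode_prod_encode [simp]: "snd_decode (prod_encode (a, b)) = b"
  by (simp add: snd_decode_def)

definition diagonal_decode :: "nat \<Rightarrow> nat" where
  "diagonal_decode p = (LEAST s. p < triangle (Suc s))"

lemma prod_decode_triangle_add:
  "prod_decode p = (a, b) \<Longrightarrow> p = triangle (a + b) + a"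
  using prod_decode_inverse[of p] by (simp add: prod_encode_def)

lemma diagonal_decode_eq: "diagonal_decode p = fst_decode p + snd_decode p"
proof -
  obtain a b where ab: "prod_decode p = (a, b)" by fastforce
  note p = prod_decode_triangle_add[OF ab]
  have "diagonal_decode p = a + b" unfolding diagonal_decode_def
  proof (rule Least_equality)
    show "p < triangle (Suc (a + b))" using p by simp
  next
    fix s assume "p < triangle (Suc s)"
    then show "a + b \<le> s" using p triangle_mono[of "Suc s" "a + b"] by linarith
  qed
  then show ?thesis using ab by (simp add: fst_decode_def snd_decode_def)
qed

lemma fst_decode_eq: "fst_decode p = p - triangle (diagonal_decode p)"
proof -
  obtain a b where ab: "prod_decode p = (a, b)" by fastforce
  then show ?thesis
    using prod_decode_triangle_add[OF ab]
    by (simp add: diagonal_decode_eq fst_decode_def snd_decode_def)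
qed

lemma snd_decode_eq: "snd_decode p = diagonal_decode p - fst_decode p"
  by (simp add: diagonal_decode_eq)

lemma recursive_diagonal_decode: "recursive 1 (\<lambda>ys. diagonal_decode (ys ! 0))"
proof -
  \<comment> \<open>Minimisation searches for a zero, and \<open>1 - (t - p) = 0\<close> expresses \<open>p < t\<close>.\<close>
  have "recursive 1 (\<lambda>xs. LEAST s. 1 - (triangle (Suc ((s # xs) ! 0)) - (s # xs) ! 1) = 0)"
  proof (rule recursive_Least)
    show "recursive (Suc 1) (\<lambda>ys. 1 - (triangle (Suc (ys ! 0)) - ys ! 1))"
      by (intro recursive_diff recursive_const recursive_triangle recursive_Suc recursive_proj) auto
    show "\<exists>s. 1 - (triangle (Suc ((s # xs) ! 0)) - (s # xs) ! 1) = 0" for xs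
    proof
      have "xs ! 0 < triangle (Suc (xs ! 0))" by (induction "xs ! 0") auto
      then show "1 - (triangle (Suc ((xs ! 0 # xs) ! 0)) - (xs ! 0 # xs) ! 1) = 0" by simp
    qed
  qed
  moreover have "(1 - (t - p) = 0) \<longleftrightarrow> p < t" for t p :: nat by linarith
  ultimately show ?thesis by (simp add: diagonal_decode_def)
qed

lemma recursive_fst_decode: "recursive n f \<Longrightarrow> recursive n (\<lambda>xs. fst_decode (f xs))"
  unfolding fst_decode_eq
    by (intro recursive_diff recursive_triangle recursive_comp1[OF recursive_diagonal_decode])

lemma recursive_snd_decode: "recursive n f \<Longrightarrow> recursive n (\<lambda>xs. snd_decode (f xs))"
  unfolding snd_decode_eq
  by (intro recursive_diff recursive_fst_decode recursive_comp1[OF recursive_diagonal_decode])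

definition computable :: "(nat \<Rightarrow> nat) \<Rightarrow> bool" where
  "computable f \<longleftrightarrow> recursive 1 (\<lambda>xs. f (xs ! 0))"

definition computable2 :: "(nat \<Rightarrow> nat \<Rightarrow> nat) \<Rightarrow> bool" where
  "computable2 g \<longleftrightarrow> computable (\<lambda>p. g (fst_decode p) (snd_decode p))"

definition decidable :: "(nat \<Rightarrow> bool) \<Rightarrow> bool" where
  "decidable P \<longleftrightarrow> computable (\<lambda>x. of_bool (P x))"

definition decidable2 :: "(nat \<Rightarrow> nat \<Rightarrow> bool) \<Rightarrow> bool" where
  "decidable2 P \<longleftrightarrow> decidable (\<lambda>p. P (fst_decode p) (snd_decode p))"

lemma computable_cong: "computable f \<Longrightarrow> (\<And>x. f x = g x) \<Longrightarrow> computable g"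
  by (metis ext)

lemma computable_id: "computable (\<lambda>x. x)"
  unfolding computable_def by (rule recursive_proj) simp

lemma computable_const: "computable (\<lambda>x. c)"
  unfolding computable_def by (rule recursive_const)

lemma computable_comp: "computable f \<Longrightarrow> computable g \<Longrightarrow> computable (\<lambda>x. f (g x))"
  unfolding computable_def by (rule recursive_comp1)

lemma computable_Suc: "computable f \<Longrightarrow> computable (\<lambda>x. Suc (f x))"
  unfolding computable_def by (rule recursive_Suc)

lemma computable_add: "computable f \<Longrightarrow> computable g \<Longrightarrow> computable (\<lambda>x. f x + g x)"
  unfolding computable_def by (rule recursive_add)

lemma computable_mult: "computable f \<Longrightarrow> computable g \<Longrightarrow> computable (\<lambda>x. f x * g x)"
  unfolding computable_def by (rule recursive_mult)

lemma computable_diff: "computable f \<Longrightarrow> computable g \<Longrightarrow> computable (\<lambda>x. f x - g x)"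
  unfolding computable_def by (rule recursive_diff)

lemma computable_prod_encode:
  "computable f \<Longrightarrow> computable g \<Longrightarrow> computable (\<lambda>x. prod_encode (f x, g x))"
  unfolding computable_def by (rule recursive_prod_encode)

lemma computable_fst_decode: "computable f \<Longrightarrow> computable (\<lambda>x. fst_decode (f x))"
  unfolding computable_def by (rule recursive_fst_decode)

lemma computable_snd_decode: "computable f \<Longrightarrow> computable (\<lambda>x. snd_decode (f x))"
  unfolding computable_def by (rule recursive_snd_decode)

lemma computable2_comp:
  "computable2 g \<Longrightarrow> computable f \<Longrightarrow> computable h \<Longrightarrow> computable (\<lambda>x. g (f x) (h x))"
  unfolding computable2_def by (drule computable_comp[OF _ computable_prod_encode]) simp_all

lemma computable_rec_nat:
  assumes base: "computable base" and step: "computable step" and count: "computable count"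
  shows "computable
    (\<lambda>x. rec_nat (base x) (\<lambda>k r. step (prod_encode (x, prod_encode (k, r)))) (count x))"
proof -
  have "recursive (Suc (Suc 1)) (\<lambda>ys. step (prod_encode (ys ! 2, prod_encode (ys ! 1, ys ! 0))))"
    by (intro recursive_comp1[where h=step, OF step[unfolded computable_def]]
        recursive_prod_encode recursive_proj) simp_all
  from recursive_rec_nat[OF base[unfolded computable_def] this]
  have "recursive 2 (\<lambda>ys. rec_nat (base (ys ! 1))
      (\<lambda>k r. step (prod_encode (ys ! 1, prod_encode (k, r)))) (ys ! 0))"
    by (rule recursive_cong) (auto simp: length_Suc_conv numeral_2_eq_2)
  from recursive_comp2[OF this count[unfolded computable_def] recursive_proj[of 0 1]]
  show ?thesis unfolding computable_def by simp
qed

lemma computable_Least: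
  assumes g: "computable2 g" and ex: "\<And>x. \<exists>y. g x y = 0"
  shows "computable (\<lambda>x. LEAST y. g x y = 0)"
proof -
  have "recursive (Suc 1) (\<lambda>ys. prod_encode (ys ! 1, ys ! 0))"
    by (intro recursive_prod_encode recursive_proj) simp_all
  from recursive_comp1[where h="\<lambda>p. g (fst_decode p) (snd_decode p)",
      OF g[unfolded computable2_def computable_def] this]
  have "recursive (Suc 1) (\<lambda>ys. g (ys ! 1) (ys ! 0))" by simp
  from recursive_Least[OF this] show ?thesis unfolding computable_def by (simp add: ex)
qed

lemma decidable_const: "decidable (\<lambda>x. c)"
  unfolding decidable_def by (rule computable_const)

lemma decidable_eq:
  assumes "computable f" "computable g"
  shows "decidable (\<lambda>x. f x = g x)"
proof -
  have "computable (\<lambda>x. 1 - ((f x - g x) + (g x - f x)))"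
    by (intro computable_diff computable_add computable_const assms)
  then show ?thesis unfolding decidable_def by (rule computable_cong) auto
qed

lemma decidable_less:
  assumes "computable f" "computable g"
  shows "decidable (\<lambda>x. f x < g x)"
proof -
  have "computable (\<lambda>x. 1 - (1 - (g x - f x)))"
    by (intro computable_diff computable_const assms)
  then show ?thesis unfolding decidable_def by (rule computable_cong) auto
qed

lemma decidable_and: "decidable P \<Longrightarrow> decidable Q \<Longrightarrow> decidable (\<lambda>x. P x \<and> Q x)"
  unfolding decidable_def by (drule (1) computable_mult) (erule computable_cong, simp)

lemma decidable_not: "decidable P \<Longrightarrow> decidable (\<lambda>x. \<not> P x)"
  unfolding decidable_def
  by (drule computable_diff[OF computable_const[of 1]]) (erule computable_cong, simp)

lemma decidable_or: "decidable P \<Longrightarrow> decidable Q \<Longrightarrow> decidable (\<lambda>x. P x \<or> Q x)"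
  using decidable_not[OF decidable_and[OF decidable_not decidable_not]] by simp

lemma decidable_imp: "decidable P \<Longrightarrow> decidable Q \<Longrightarrow> decidable (\<lambda>x. P x \<longrightarrow> Q x)"
  using decidable_or[OF decidable_not] by simp

lemma decidable_comp: "decidable P \<Longrightarrow> computable f \<Longrightarrow> decidable (\<lambda>x. P (f x))"
  unfolding decidable_def by (drule (1) computable_comp) simp

lemma decidable_Ball_set:
  "(\<And>a. a \<in> set as \<Longrightarrow> decidable (P a)) \<Longrightarrow> decidable (\<lambda>x. \<forall>a\<in>set as. P a x)"
  by (induction as) (auto intro: decidable_const decidable_and)

lemma computable_div:
  assumes f: "computable f" and g: "computable g"
  shows "computable (\<lambda>x. f x div g x)"
proof -
  let ?h = "\<lambda>x y. of_bool (g x \<noteq> 0 \<and> \<not> f x < (y + 1) * g x) :: nat"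
  have "decidable (\<lambda>p. g (fst_decode p) \<noteq> 0 \<and>
    \<not> f (fst_decode p) < (snd_decode p + 1) * g (fst_decode p))"
    by (intro decidable_and decidable_not decidable_eq decidable_less computable_comp[OF f]
        computable_comp[OF g] computable_mult computable_add computable_fst_decode
        computable_snd_decode computable_id computable_const)
  then have h: "computable2 ?h" unfolding computable2_def decidable_def .
  have ex: "\<exists>y. ?h x y = 0" for x
  proof (cases "g x = 0")
    case False
    then have "(f x + 1) * 1 \<le> (f x + 1) * g x" by (intro mult_le_mono2) simp
    then have "f x < (f x + 1) * g x" by simp
    then show ?thesis by (intro exI[of _ "f x"]) simp
  qed simp
  have eq: "(LEAST y. ?h x y = 0) = f x div g x" for x
  proof (cases "g x = 0")
    case False
    show ?thesis
    proof (rule Least_equality)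
      have "f x < g x * (f x div g x) + g x"
        using mult_div_mod_eq[of "g x" "f x"] mod_less_divisor[of "g x" "f x"] False by linarith
      then have "f x < (f x div g x + 1) * g x" by (simp add: algebra_simps)
      then show "?h x (f x div g x) = 0" by simp
    next
      fix y assume "?h x y = 0"
      then have "f x < (y + 1) * g x" using False by simp
      then have "f x div g x < y + 1" by (rule less_mult_imp_div_less)
      then show "f x div g x \<le> y" by simp
    qed
  qed simp
  from computable_Least[OF h ex] show ?thesis by (simp only: eq)
qed

lemma computable_mod:
  assumes "computable f" "computable g"
  shows "computable (\<lambda>x. f x mod g x)"
proof -
  have "computable (\<lambda>x. f x - g x * (f x div g x))"
    by (intro computable_diff computable_mult computable_div assms)
  then show ?thesis by (rule computable_cong) (simp add: minus_mult_div_eq_mod)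
qed

lemma computable_power:
  assumes "computable f" "computable g"
  shows "computable (\<lambda>x. g x ^ f x)"
proof -
  have "computable (\<lambda>x. rec_nat 1 (\<lambda>k r. (\<lambda>p. snd_decode (snd_decode p) * g (fst_decode p))
      (prod_encode (x, prod_encode (k, r)))) (f x))"
    by (intro computable_rec_nat computable_const computable_mult computable_snd_decode
        computable_id computable_comp[OF assms(2)] computable_fst_decode assms(1))
  moreover have "rec_nat 1 (\<lambda>k r. r * b) n = b ^ n" for b n :: nat by (induction n) auto
  ultimately show ?thesis by simp
qed

lemma computable_sum:
  assumes g: "computable2 g" and count: "computable count"
  shows "computable (\<lambda>x. \<Sum>j<count x. g x j)"
proof -
  have "computable (\<lambda>x. rec_nat 0 (\<lambda>k r. (\<lambda>p. snd_decode (snd_decode p)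
      + g (fst_decode p) (fst_decode (snd_decode p)))
        (prod_encode (x, prod_encode (k, r)))) (count x))"
    by (intro computable_rec_nat count computable_const computable_add computable_snd_decode
        computable_id computable2_comp[OF g] computable_fst_decode)
  moreover have "rec_nat 0 (\<lambda>k r. r + g x k) n = (\<Sum>j<n. g x j)" for x n by (induction n) auto
  ultimately show ?thesis by simp
qed

lemma decidable_all_less:
  assumes P: "decidable2 P" and count: "computable count"
  shows "decidable (\<lambda>x. \<forall>y<count x. P x y)"
proof -
  have P': "computable2 (\<lambda>x y. of_bool (P x y))"
    using P unfolding decidable2_def decidable_def computable2_def .
  have "computable (\<lambda>x. rec_nat 1 (\<lambda>k r. (\<lambda>p. snd_decode (snd_decode p)
      * of_bool (P (fst_decode p) (fst_decode (snd_decode p))))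
      (prod_encode (x, prod_encode (k, r)))) (count x))"
    by (intro computable_rec_nat count computable_const computable_mult computable_snd_decode
        computable_id computable2_comp[OF P'] computable_fst_decode)
  moreover have "rec_nat 1 (\<lambda>k r. r * of_bool (P x k)) n = (of_bool (\<forall>y<n. P x y) :: nat)" for x n
    by (induction n) (auto simp: less_Suc_eq)
  ultimately show ?thesis unfolding decidable_def by simp
qed

definition tl_code :: "nat \<Rightarrow> nat" where
  "tl_code c = snd_decode (c - 1)"

definition nth_code :: "nat \<Rightarrow> nat \<Rightarrow> nat" where
  "nth_code c p = fst_decode ((tl_code ^^ p) c - 1)"

lemma nth_code_list_encode: "p < length xs \<Longrightarrow> nth_code (list_encode xs) p = xs ! p"
proof (induction p arbitrary: xs)
  case 0
  then show ?case by (cases xs) (auto simp: nth_code_def)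
next
  case (Suc p)
  then obtain y ys where "xs = y # ys" by (cases xs) auto
  with Suc show ?case
    by (simp add: nth_code_def funpow_Suc_right tl_code_def del: funpow.simps)
qed

lemma computable_nth_code:
  assumes "computable c" "computable p"
  shows "computable (\<lambda>x. nth_code (c x) (p x))"
proof -
  have "computable (\<lambda>x. rec_nat (c x) (\<lambda>k r. (\<lambda>q. snd_decode (snd_decode (snd_decode q) - 1))
      (prod_encode (x, prod_encode (k, r)))) (p x))"
    by (intro computable_rec_nat assms computable_diff computable_snd_decode computable_id
        computable_const)
  moreover have "rec_nat a (\<lambda>k r. tl_code r) m = (tl_code ^^ m) a" for a m
    by (induction m) auto
  ultimately have "computable (\<lambda>x. (tl_code ^^ p x) (c x))" by (simp add: tl_code_def)
  then have "computable (\<lambda>x. fst_decode ((tl_code ^^ p x) (c x) - 1))"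
    by (intro computable_fst_decode computable_diff computable_const)
  then show ?thesis by (simp add: nth_code_def)
qed

definition append_code :: "nat list \<Rightarrow> nat \<Rightarrow> nat" where
  "append_code xs c = foldr (\<lambda>y c. Suc (prod_encode (y, c))) xs c"

lemma append_code_list_encode: "append_code xs (list_encode ys) = list_encode (xs @ ys)"
  by (induction xs) (auto simp: append_code_def)

lemma computable_append_code:
  assumes g: "computable2 g" and L: "computable L" and c: "computable c"
  shows "computable (\<lambda>x. append_code (map (g x) [0..<L x]) (c x))"
proof -
  \<comment> \<open>The list is built back to front: step \<open>k\<close> prepends the element at index \<open>L x - Suc k\<close>.\<close>
  have "computable (\<lambda>x. rec_nat (c x) (\<lambda>k r. (\<lambda>p. Suc (prod_encode
      (g (fst_decode p) (L (fst_decode p) - Suc (fst_decode (snd_decode p))),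
        snd_decode (snd_decode p))))
      (prod_encode (x, prod_encode (k, r)))) (L x))"
    by (intro computable_rec_nat c L computable_Suc computable_prod_encode computable2_comp[OF g]
        computable_fst_decode computable_snd_decode computable_diff computable_comp[OF L]
        computable_id)
  moreover have "rec_nat a (\<lambda>k r. Suc (prod_encode (g x (m - Suc k), r))) n
      = append_code (map (g x) [m - n..<m]) a" if "n \<le> m" for x m a n
    using that
  proof (induction n)
    case (Suc n)
    then have "[m - Suc n..<m] = (m - Suc n) # [m - n..<m]"
      by (simp add: upt_conv_Cons Suc_diff_Suc)
    with Suc show ?case by (simp add: append_code_def)
  qed (simp add: append_code_def)
  ultimately show ?thesis by simp
qed

lemma append_code_0: "append_code xs 0 = list_encode xs"
  using append_code_list_encode[of xs "[]"] by simp

lemma computable_list_encode_upt: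
  "computable2 g \<Longrightarrow> computable L \<Longrightarrow> computable (\<lambda>x. list_encode (map (g x) [0..<L x]))"
  using computable_append_code[OF _ _ computable_const[of 0]] by (simp add: append_code_0)

lemma computable_list_encode_map:
  "(\<And>a. a \<in> set as \<Longrightarrow> computable (E a)) \<Longrightarrow> computable (\<lambda>x. list_encode (map (\<lambda>a. E a x) as))"
  by (induction as) (auto intro!: computable_Suc computable_prod_encode intro: computable_const)

section \<open>Finite-valued logics\<close>

lemma eval_less_nv:
  assumes M: "wf_logic ar M" and v: "valuation M v"
  shows "wf_form ar F \<Longrightarrow> eval M v F < nv M"
proof (induction F)
  case (Var x)
  then show ?case using v by (simp add: valuation_def)
next
  case (Op k args)
  then have "k < length ar" "length (map (eval M v) args) = ar ! k"
    "set (map (eval M v) args) \<subseteq> {0..<nv M}"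
    by auto
  then show ?case using M unfolding wf_logic_def by simp
qed

lemma is_cover_iff:
  "is_cover ar M C \<longleftrightarrow> (\<forall>A\<in>set (axioms C). A \<in> Taut ar M) \<and>
    (\<forall>ps c. (ps, c) \<in> set (rules C) \<longrightarrow>
      (\<forall>v. valuation M v \<longrightarrow> (\<forall>p\<in>set ps. satisfies M v p) \<longrightarrow> satisfies M v c))"
  unfolding is_cover_def by auto

definition logic_equiv :: "nat list \<Rightarrow> fvlogic \<Rightarrow> fvlogic \<Rightarrow> bool" where
  "logic_equiv ar M N \<longleftrightarrow> nv M = nv N \<and> des M = des N \<and>
     (\<forall>k<length ar. \<forall>xs. length xs = ar ! k \<and> set xs \<subseteq> {0..<nv M} \<longrightarrow> tfun M k xs = tfun N k xs)"

lemma logic_equiv_eval: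
  assumes M: "wf_logic ar M" and v: "valuation M v" and MN: "logic_equiv ar M N"
  shows "wf_form ar F \<Longrightarrow> eval M v F = eval N v F"
proof (induction F)
  case (Op k args)
  have "k < length ar" "length (map (eval M v) args) = ar ! k"
    "set (map (eval M v) args) \<subseteq> {0..<nv M}"
    using Op.prems eval_less_nv[OF M v] by auto
  moreover have "map (eval M v) args = map (eval N v) args" using Op by auto
  ultimately show ?case using MN unfolding logic_equiv_def by (simp del: map_eq_conv)
qed simp

lemma logic_equiv_satisfies:
  assumes "wf_logic ar M" "valuation M v" "logic_equiv ar M N" "wf_form ar F"
  shows "satisfies M v F \<longleftrightarrow> satisfies N v F"
  using logic_equiv_eval[OF assms] assms(3) unfolding satisfies_def logic_equiv_def by simp

lemma logic_equiv_valuation: "logic_equiv ar M N \<Longrightarrow> valuation M v \<longleftrightarrow> valuation N v"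
  by (simp add: valuation_def logic_equiv_def)

lemma logic_equiv_Taut:
  assumes M: "wf_logic ar M" and MN: "logic_equiv ar M N"
  shows "Taut ar M = Taut ar N"
  using logic_equiv_satisfies[OF M _ MN] logic_equiv_valuation[OF MN]
  unfolding Taut_def formulas_def by auto

lemma logic_equiv_is_cover:
  assumes M: "wf_logic ar M" and MN: "logic_equiv ar M N" and C: "wf_calculus ar C"
  shows "is_cover ar M C \<longleftrightarrow> is_cover ar N C"
proof -
  have "(\<forall>v. valuation M v \<longrightarrow> (\<forall>p\<in>set ps. satisfies M v p) \<longrightarrow> satisfies M v c) \<longleftrightarrow>
        (\<forall>v. valuation N v \<longrightarrow> (\<forall>p\<in>set ps. satisfies N v p) \<longrightarrow> satisfies N v c)"
    if "(ps, c) \<in> set (rules C)" for ps c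
  proof -
    have "\<forall>p\<in>set ps. wf_form ar p" "wf_form ar c"
      using C that unfolding wf_calculus_def by auto
    then show ?thesis
      using logic_equiv_satisfies[OF M _ MN] logic_equiv_valuation[OF MN] by (metis (full_types))
  qed
  then show ?thesis unfolding is_cover_iff logic_equiv_Taut[OF M MN] by simp
qed

text \<open>Reducing the table entries modulo the number of values makes every code decode to a
  well-formed logic.\<close>

definition decode_logic :: "nat \<Rightarrow> fvlogic" where
  "decode_logic n = \<lparr>nv = Suc (fst_decode n),
     des = {x. x < Suc (fst_decode n) \<and> nth_code (fst_decode (snd_decode n)) x \<noteq> 0},
     tfun = (\<lambda>k xs. nth_code (snd_decode (snd_decode n)) (prod_encode (k, list_encode xs))
       mod Suc (fst_decode n))\<rparr>"

lemma decode_logic_simps: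
  "nv (decode_logic n) = Suc (fst_decode n)"
  "des (decode_logic n) = {x. x < Suc (fst_decode n) \<and> nth_code (fst_decode (snd_decode n)) x \<noteq> 0}"
  "tfun (decode_logic n) k xs =
     nth_code (snd_decode (snd_decode n)) (prod_encode (k, list_encode xs)) mod Suc (fst_decode n)"
  by (simp_all add: decode_logic_def)

lemma wf_decode_logic: "wf_logic ar (decode_logic n)"
  unfolding wf_logic_def decode_logic_simps by auto

lemma ex_logic_equiv_decode_logic:
  assumes M: "wf_logic ar M"
  shows "\<exists>n. logic_equiv ar M (decode_logic n)"
proof -
  define S where "S = {prod_encode (k, list_encode xs) | k xs.
    k < length ar \<and> length xs = ar ! k \<and> set xs \<subseteq> {0..<nv M}}"
  have "S \<subseteq> (\<lambda>(k, xs). prod_encode (k, list_encode xs)) `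
      ({..<length ar} \<times> {xs. set xs \<subseteq> {0..<nv M} \<and> length xs \<le> sum_list ar})"
    unfolding S_def by (auto intro!: image_eqI member_le_sum_list)
  moreover have "finite ({..<length ar} \<times> {xs. set xs \<subseteq> {0..<nv M} \<and> length xs \<le> sum_list ar})"
    by (intro finite_cartesian_product finite_lists_length_le) auto
  ultimately have "finite S" by (meson finite_imageI finite_subset)
  then obtain B where B: "\<forall>s\<in>S. s < B" using finite_nat_set_iff_bounded by blast
  define d where "d = list_encode (map (\<lambda>x. of_bool (x \<in> des M)) [0..<nv M])"
  define t where
    "t = list_encode (map (\<lambda>p. tfun M (fst_decode p) (list_decode (snd_decode p))) [0..<B])"
  define n where "n = prod_encode (nv M - 1, prod_encode (d, t))"
  have nv: "Suc (fst_decode n) = nv M" using M unfolding n_def wf_logic_def by simp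
  have "des (decode_logic n) = des M"
  proof -
    have "nth_code d x = of_bool (x \<in> des M)" if "x < nv M" for x
      using that unfolding d_def by (simp add: nth_code_list_encode)
    then show ?thesis using M nv unfolding decode_logic_simps wf_logic_def by (auto simp: n_def)
  qed
  moreover have "tfun M k xs = tfun (decode_logic n) k xs"
    if "k < length ar" "length xs = ar ! k" "set xs \<subseteq> {0..<nv M}" for k xs
  proof -
    have "prod_encode (k, list_encode xs) < B" using that B unfolding S_def by blast
    then have "nth_code t (prod_encode (k, list_encode xs)) = tfun M k xs"
      unfolding t_def by (simp add: nth_code_list_encode)
    moreover have "tfun M k xs < nv M" using M that unfolding wf_logic_def by blast
    ultimately show ?thesis unfolding decode_logic_simps nv by (simp add: n_def)
  qed
  ultimately have "logic_equiv ar M (decode_logic n)"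
    unfolding logic_equiv_def decode_logic_simps nv by simp
  then show ?thesis by blast
qed

definition all_designated :: "fvlogic \<Rightarrow> fvlogic" where
  "all_designated M = M\<lparr>des := {0..<nv M}\<rparr>"

lemma
  assumes M: "wf_logic ar M" and C: "wf_calculus ar C"
  shows wf_all_designated: "wf_logic ar (all_designated M)"
    and is_cover_all_designated: "is_cover ar (all_designated M) C"
proof -
  show wf: "wf_logic ar (all_designated M)"
    using M unfolding wf_logic_def all_designated_def by simp
  have sat: "satisfies (all_designated M) v F" if "valuation (all_designated M) v" "wf_form ar F"
    for v F
    using eval_less_nv[OF wf that] unfolding satisfies_def by (simp add: all_designated_def)
  then have Taut: "Taut ar (all_designated M) = formulas ar"
    unfolding Taut_def formulas_def by auto
  show "is_cover ar (all_designated M) C"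
    using C sat unfolding is_cover_def Taut wf_calculus_def formulas_def by fast
qed

text \<open>A decoded logic that is no cover is replaced by one in which every formula is a tautology;
  such a cover does not affect the many-valued closure.\<close>

definition nth_cover :: "nat list \<Rightarrow> calculus \<Rightarrow> nat \<Rightarrow> fvlogic" where
  "nth_cover ar C n =
     (if is_cover ar (decode_logic n) C then decode_logic n else all_designated (decode_logic n))"

lemma
  assumes "wf_calculus ar C"
  shows wf_nth_cover: "wf_logic ar (nth_cover ar C n)"
    and is_cover_nth_cover: "is_cover ar (nth_cover ar C n) C"
  using wf_all_designated[OF wf_decode_logic assms]
    is_cover_all_designated[OF wf_decode_logic assms]
    wf_decode_logic
  unfolding nth_cover_def by auto

lemma MC_eq_INT_nth_cover:
  assumes C: "wf_calculus ar C"
  shows "MC ar C = formulas ar \<inter> (\<Inter>n. Taut ar (nth_cover ar C n))"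
proof (intro equalityI subsetI)
  fix F assume "F \<in> MC ar C"
  then show "F \<in> formulas ar \<inter> (\<Inter>n. Taut ar (nth_cover ar C n))"
    using wf_nth_cover[OF C] is_cover_nth_cover[OF C] unfolding MC_def by auto
next
  fix F assume F: "F \<in> formulas ar \<inter> (\<Inter>n. Taut ar (nth_cover ar C n))"
  have "F \<in> Taut ar M" if M: "wf_logic ar M" "is_cover ar M C" for M
  proof -
    obtain n where MN: "logic_equiv ar M (decode_logic n)"
      using ex_logic_equiv_decode_logic[OF M(1)] by blast
    then have "nth_cover ar C n = decode_logic n"
      using logic_equiv_is_cover[OF M(1) MN C] M(2) by (simp add: nth_cover_def)
    then show ?thesis using F logic_equiv_Taut[OF M(1) MN] by (metis IntD2 INT_iff UNIV_I)
  qed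
  then show "F \<in> MC ar C" using F unfolding MC_def by blast
qed

subsection \<open>Products of logics\<close>

text \<open>The value \<open>a + nv M * b\<close> of the product stands for the pair of values \<open>a\<close> of \<open>M\<close>
  and \<open>b\<close> of \<open>N\<close>.\<close>

definition prod_logic :: "fvlogic \<Rightarrow> fvlogic \<Rightarrow> fvlogic" where
  "prod_logic M N = \<lparr>nv = nv M * nv N,
     des = {a. a < nv M * nv N \<and> a mod nv M \<in> des M \<and> a div nv M mod nv N \<in> des N},
     tfun = (\<lambda>k xs. tfun M k (map (\<lambda>a. a mod nv M) xs)
       + nv M * tfun N k (map (\<lambda>a. a div nv M mod nv N) xs))\<rparr>"

lemma prod_logic_simps:
  "nv (prod_logic M N) = nv M * nv N"
  "des (prod_logic M N) = {a. a < nv M * nv N \<and> a mod nv M \<in> des M \<and> a div nv M mod nv N \<in> des N}"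
  "tfun (prod_logic M N) k xs = tfun M k (map (\<lambda>a. a mod nv M) xs)
     + nv M * tfun N k (map (\<lambda>a. a div nv M mod nv N) xs)"
  by (simp_all add: prod_logic_def)

lemma
  fixes a b m n :: nat
  assumes "a < m" "b < n"
  shows mod_add_mult_self: "(a + m * b) mod m = a"
    and div_mod_add_mult_self: "(a + m * b) div m mod n = b"
    and add_mult_less_mult: "a + m * b < m * n"
proof -
  show "(a + m * b) mod m = a" "(a + m * b) div m mod n = b" using assms by simp_all
  have "a + m * b < m * Suc b" using assms by simp
  also have "\<dots> \<le> m * n" using assms by (intro mult_le_mono2) simp
  finally show "a + m * b < m * n" .
qed

lemma wf_prod_logic:
  assumes M: "wf_logic ar M" and N: "wf_logic ar N"
  shows "wf_logic ar (prod_logic M N)"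
proof -
  have "tfun M k (map (\<lambda>a. a mod nv M) xs) + nv M * tfun N k (map (\<lambda>a. a div nv M mod nv N) xs)
      < nv M * nv N"
    if "k < length ar" "length xs = ar ! k" for k xs
  proof (rule add_mult_less_mult)
    have "0 < nv M" "0 < nv N" using M N unfolding wf_logic_def by simp_all
    then have "set (map (\<lambda>a. a mod nv M) xs) \<subseteq> {0..<nv M}"
      "set (map (\<lambda>a. a div nv M mod nv N) xs) \<subseteq> {0..<nv N}"
      by auto
    then show "tfun M k (map (\<lambda>a. a mod nv M) xs) < nv M"
      "tfun N k (map (\<lambda>a. a div nv M mod nv N) xs) < nv N"
      using M N that unfolding wf_logic_def by (metis length_map)+
  qed
  then show ?thesis using M N unfolding wf_logic_def prod_logic_simps by auto
qed

lemma
  assumes "wf_logic ar M" "wf_logic ar N"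
  shows valuation_prod_fst: "valuation M (\<lambda>x. v x mod nv M)"
    and valuation_prod_snd: "valuation N (\<lambda>x. v x div nv M mod nv N)"
  using assms unfolding valuation_def wf_logic_def by simp_all

lemma eval_prod_logic:
  assumes M: "wf_logic ar M" and N: "wf_logic ar N" and v: "valuation (prod_logic M N) v"
  shows "wf_form ar F \<Longrightarrow> eval (prod_logic M N) v F =
    eval M (\<lambda>x. v x mod nv M) F + nv M * eval N (\<lambda>x. v x div nv M mod nv N) F"
proof (induction F)
  case (Var x)
  have "v x < nv M * nv N" using v unfolding valuation_def prod_logic_simps by blast
  then have "v x div nv M < nv N" by (simp add: less_mult_imp_div_less mult.commute)
  then show ?case by simp
next
  case (Op k args)
  note less = eval_less_nv[OF M valuation_prod_fst[OF M N]]
    eval_less_nv[OF N valuation_prod_snd[OF M N]]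
  have "map (\<lambda>a. a mod nv M) (map (eval (prod_logic M N) v) args)
      = map (eval M (\<lambda>x. v x mod nv M)) args"
    "map (\<lambda>a. a div nv M mod nv N) (map (eval (prod_logic M N) v) args)
      = map (eval N (\<lambda>x. v x div nv M mod nv N)) args"
    using Op less by (auto simp: mod_add_mult_self div_mod_add_mult_self)
  then show ?case by (simp only: eval.simps prod_logic_simps)
qed

lemma satisfies_prod_logic:
  assumes M: "wf_logic ar M" and N: "wf_logic ar N" and v: "valuation (prod_logic M N) v"
    and F: "wf_form ar F"
  shows "satisfies (prod_logic M N) v F \<longleftrightarrow>
    satisfies M (\<lambda>x. v x mod nv M) F \<and> satisfies N (\<lambda>x. v x div nv M mod nv N) F"
  using eval_less_nv[OF M valuation_prod_fst[OF M N] F]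
    eval_less_nv[OF N valuation_prod_snd[OF M N] F]
  by (simp add: satisfies_def eval_prod_logic[OF M N v F] prod_logic_simps
      mod_add_mult_self div_mod_add_mult_self add_mult_less_mult)

lemma Taut_prod_logic:
  assumes M: "wf_logic ar M" and N: "wf_logic ar N"
  shows "Taut ar (prod_logic M N) = Taut ar M \<inter> Taut ar N"
proof -
  \<comment> \<open>Every pair of valuations of the factors arises as the projections of a valuation
    of the product.\<close>
  have pair: "valuation (prod_logic M N) (\<lambda>x. u x + nv M * w x) \<and>
      (\<lambda>x. (u x + nv M * w x) mod nv M) = u \<and> (\<lambda>x. (u x + nv M * w x) div nv M mod nv N) = w"
    if "valuation M u" "valuation N w" for u w
    using that by (simp add: valuation_def prod_logic_simps add_mult_less_mult
        mod_add_mult_self div_mod_add_mult_self)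
  have sat: "(\<forall>v. valuation (prod_logic M N) v \<longrightarrow> satisfies (prod_logic M N) v F) \<longleftrightarrow>
      (\<forall>u w. valuation M u \<longrightarrow> valuation N w \<longrightarrow> satisfies M u F \<and> satisfies N w F)"
    if F: "wf_form ar F" for F
  proof
    assume all: "\<forall>v. valuation (prod_logic M N) v \<longrightarrow> satisfies (prod_logic M N) v F"
    show "\<forall>u w. valuation M u \<longrightarrow> valuation N w \<longrightarrow> satisfies M u F \<and> satisfies N w F"
    proof (intro allI impI)
      fix u w assume "valuation M u" "valuation N w"
      then have v: "valuation (prod_logic M N) (\<lambda>x. u x + nv M * w x)"
        and "(\<lambda>x. (u x + nv M * w x) mod nv M) = u" "(\<lambda>x. (u x + nv M * w x) div nv M mod nv N) = w"
        using pair by blast+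
      with all show "satisfies M u F \<and> satisfies N w F"
        using satisfies_prod_logic[OF M N v F] by simp
    qed
  qed (use satisfies_prod_logic[OF M N _ F] valuation_prod_fst[OF M N] valuation_prod_snd[OF M N]
      in blast)
  have "valuation M (\<lambda>_. 0)" "valuation N (\<lambda>_. 0)"
    using M N unfolding wf_logic_def valuation_def by simp_all
  then show ?thesis unfolding Taut_def formulas_def by (auto simp: sat) (use sat in blast)
qed

definition trivial_logic :: fvlogic where
  "trivial_logic = \<lparr>nv = 1, des = {0}, tfun = (\<lambda>k xs. 0)\<rparr>"

lemma wf_trivial_logic: "wf_logic ar trivial_logic"
  by (simp add: wf_logic_def trivial_logic_def)

lemma Taut_trivial_logic: "Taut ar trivial_logic = formulas ar"
proof -
  have "eval trivial_logic v F = 0" if "valuation trivial_logic v" for v F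
    using that by (cases F) (auto simp: trivial_logic_def valuation_def)
  then show ?thesis by (auto simp: Taut_def satisfies_def trivial_logic_def)
qed

primrec cover_prod :: "nat list \<Rightarrow> calculus \<Rightarrow> nat \<Rightarrow> fvlogic" where
  "cover_prod ar C 0 = trivial_logic"
| "cover_prod ar C (Suc i) = prod_logic (cover_prod ar C i) (nth_cover ar C i)"

lemma wf_cover_prod: "wf_calculus ar C \<Longrightarrow> wf_logic ar (cover_prod ar C i)"
  by (induction i) (simp_all add: wf_trivial_logic wf_prod_logic wf_nth_cover)

lemma Taut_cover_prod:
  assumes "wf_calculus ar C"
  shows "Taut ar (cover_prod ar C i) = formulas ar \<inter> (\<Inter>j<i. Taut ar (nth_cover ar C j))"
  by (induction i)
    (auto simp: Taut_trivial_logic Taut_prod_logic wf_cover_prod wf_nth_cover assms lessThan_Suc)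

lemma seq_approx_cover_prod:
  assumes C: "wf_calculus ar C"
  shows "seq_approx ar (MC ar C) (cover_prod ar C)"
  unfolding seq_approx_def
proof (intro conjI allI impI)
  show "wf_logic ar (cover_prod ar C i)" for i by (rule wf_cover_prod[OF C])
  show "Taut ar (cover_prod ar C i) \<subseteq> Taut ar (cover_prod ar C j)" if "j \<le> i" for i j
    using that unfolding Taut_cover_prod[OF C] by auto
  show "MC ar C = (\<Inter>i. Taut ar (cover_prod ar C i))"
    unfolding MC_eq_INT_nth_cover[OF C] Taut_cover_prod[OF C] using lessI by blast
qed

section \<open>Effectiveness\<close>

definition nth_tuple :: "nat \<Rightarrow> nat \<Rightarrow> nat \<Rightarrow> nat list" where
  "nth_tuple n m q = map (\<lambda>l. q div n ^ (m - 1 - l) mod n) [0..<m]"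

lemma mod_mult_div_mod:
  fixes a b c r :: nat
  assumes "0 < b"
  shows "a mod (b * c * r) div b mod c = a div b mod c"
proof -
  have "a mod (b * (c * r)) div b = a div b mod (c * r)"
    using assms by (simp add: mod_mult2_eq)
  then show ?thesis by (simp add: mult.assoc mod_mod_cancel)
qed

lemma concat_map_map_upt:
  assumes "0 < K"
  shows "concat (map (\<lambda>v. map (f v) [0..<K]) [0..<n]) = map (\<lambda>q. f (q div K) (q mod K)) [0..<n * K]"
proof (induction n)
  case (Suc n)
  have "[0..<Suc n * K] = [0..<n * K + K]" by (simp add: add.commute)
  also have "\<dots> = [0..<n * K] @ [n * K..<n * K + K]" by (rule upt_add_eq_append) simp
  also have "[n * K..<n * K + K] = map (\<lambda>r. r + n * K) [0..<K]"
    by (simp add: map_add_upt add.commute)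
  finally have "[0..<Suc n * K] = [0..<n * K] @ map (\<lambda>r. r + n * K) [0..<K]" .
  moreover have "map (\<lambda>q. f (q div K) (q mod K)) (map (\<lambda>r. r + n * K) [0..<K]) = map (f n) [0..<K]"
    using assms by auto
  ultimately show ?case using Suc by simp
qed simp

lemma nth_tuple_Suc:
  assumes n: "0 < n" and q: "q < n * n ^ m"
  shows "nth_tuple n (Suc m) q = q div n ^ m # nth_tuple n m (q mod n ^ m)"
proof -
  have digit: "q mod n ^ m div n ^ e mod n = q div n ^ e mod n" if e: "e < m" for e
  proof -
    obtain d where "m = Suc (e + d)" using less_imp_Suc_add[OF e] by blast
    then have "n ^ m = n ^ e * n * n ^ d" by (simp add: power_add)
    then show ?thesis using mod_mult_div_mod[of "n ^ e" q n "n ^ d"] n by simp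
  qed
  have "map (\<lambda>l. q div n ^ (m - Suc l) mod n) [0..<m] = nth_tuple n m (q mod n ^ m)"
    unfolding nth_tuple_def by (rule map_cong) (auto simp: digit)
  moreover have "q div n ^ m < n" using q by (simp add: less_mult_imp_div_less mult.commute)
  ultimately show ?thesis unfolding nth_tuple_def map_upt_Suc by simp
qed

lemma tuples_conv_nth_tuple: "0 < n \<Longrightarrow> tuples n m = map (nth_tuple n m) [0..<n ^ m]"
proof (induction m)
  case 0
  then show ?case by (simp add: nth_tuple_def)
next
  case (Suc m)
  have "tuples n (Suc m) = concat (map (\<lambda>v. map (\<lambda>q. v # nth_tuple n m q) [0..<n ^ m]) [0..<n])"
    using Suc by (simp add: comp_def)
  also have "\<dots> = map (\<lambda>q. q div n ^ m # nth_tuple n m (q mod n ^ m)) [0..<n * n ^ m]"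
    using Suc.prems by (simp add: concat_map_map_upt)
  also have "\<dots> = map (nth_tuple n (Suc m)) [0..<n ^ Suc m]"
    using nth_tuple_Suc[OF Suc.prems] by simp
  finally show ?case .
qed

lemma computable_logic_code:
  fixes Ms :: "nat \<Rightarrow> fvlogic"
  assumes pos: "\<And>i. 0 < nv (Ms i)"
    and nv: "computable (\<lambda>i. nv (Ms i))"
    and des: "decidable2 (\<lambda>i a. a \<in> des (Ms i))"
    and tfun: "\<And>k. k < length ar \<Longrightarrow>
      computable2 (\<lambda>i q. tfun (Ms i) k (nth_tuple (nv (Ms i)) (ar ! k) q))"
  shows "computable (\<lambda>i. logic_code ar (Ms i))"
proof -
  define table where "table i k = map (\<lambda>q. tfun (Ms i) k (nth_tuple (nv (Ms i)) (ar ! k) q))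
    [0..<nv (Ms i) ^ (ar ! k)]" for i k
  define tables where "tables ks i = foldr (\<lambda>k. append_code (table i k)) ks 0" for ks i
  have tables_eq:
    "list_encode (concat (map (\<lambda>k. map (tfun (Ms i) k) (tuples (nv (Ms i)) (ar ! k))) ks))
      = tables ks i" for ks i
  proof (induction ks)
    case (Cons k ks)
    have "map (tfun (Ms i) k) (tuples (nv (Ms i)) (ar ! k)) = table i k"
      by (simp add: table_def tuples_conv_nth_tuple[OF pos])
    then show ?case
      using Cons by (simp add: tables_def append_code_list_encode[symmetric] del: list_encode.simps)
  qed (simp add: tables_def)
  have computable_tables: "computable (tables ks)" if "set ks \<subseteq> {..<length ar}" for ks
    using that
  proof (induction ks)
    case Nil
    then show ?case by (simp add: tables_def computable_const)
  next
    case (Cons k ks)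
    then have "computable (\<lambda>i. append_code (table i k) (tables ks i))"
      unfolding table_def
      by (intro computable_append_code tfun computable_power nv computable_const) auto
    then show ?case by (simp add: tables_def)
  qed
  have "computable2 (\<lambda>i a. of_bool (a \<in> des (Ms i)))"
    using des unfolding decidable2_def decidable_def computable2_def .
  then have "computable (\<lambda>i. Suc (prod_encode (nv (Ms i),
      append_code (map (\<lambda>a. of_bool (a \<in> des (Ms i))) [0..<nv (Ms i)])
        (tables [0..<length ar] i))))"
    by (intro computable_Suc computable_prod_encode nv computable_append_code computable_tables)
      auto
  then show ?thesis
    by (rule computable_cong)
      (simp add: logic_code_def of_bool_def append_code_list_encode flip: tables_eq)
qed

definition place_value :: "nat \<Rightarrow> nat" where
  "place_value i = (\<Prod>l<i. Suc (fst_decode l))"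

definition mixed_digit :: "nat \<Rightarrow> nat \<Rightarrow> nat" where
  "mixed_digit j a = a div place_value j mod Suc (fst_decode j)"

lemma place_value_pos: "0 < place_value i"
  by (simp add: place_value_def)

lemma place_value_Suc: "place_value (Suc i) = place_value i * Suc (fst_decode i)"
  by (simp add: place_value_def)

lemma mixed_digit_mod_place_value:
  assumes "j < i"
  shows "mixed_digit j (a mod place_value i) = mixed_digit j a"
proof -
  have "place_value (Suc j) dvd place_value i"
    unfolding place_value_def using assms by (intro prod_dvd_prod_subset) auto
  then obtain r where "place_value i = place_value j * Suc (fst_decode j) * r"
    by (auto simp: place_value_Suc)
  then show ?thesis
    unfolding mixed_digit_def by (simp only: mod_mult_div_mod[OF place_value_pos])
qed

lemma nv_nth_cover: "nv (nth_cover ar C j) = Suc (fst_decode j)"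
  by (simp add: nth_cover_def all_designated_def decode_logic_simps)

lemma tfun_nth_cover: "tfun (nth_cover ar C j) = tfun (decode_logic j)"
  by (simp add: nth_cover_def all_designated_def)

lemma nv_cover_prod: "nv (cover_prod ar C i) = place_value i"
  by (induction i) (simp_all add: trivial_logic_def place_value_def prod_logic_simps nv_nth_cover)

lemma des_cover_prod:
  "a \<in> des (cover_prod ar C i) \<longleftrightarrow>
    a < place_value i \<and> (\<forall>j<i. mixed_digit j a \<in> des (nth_cover ar C j))"
proof (induction i arbitrary: a)
  case 0
  then show ?case by (auto simp: trivial_logic_def place_value_def)
next
  case (Suc i)
  have "a \<in> des (cover_prod ar C (Suc i)) \<longleftrightarrow> a < place_value (Suc i) \<and>
      a mod place_value i \<in> des (cover_prod ar C i) \<and> mixed_digit i a \<in> des (nth_cover ar C i)"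
    by (simp add: prod_logic_simps nv_cover_prod nv_nth_cover place_value_Suc mixed_digit_def)
  also have "\<dots> \<longleftrightarrow> a < place_value (Suc i) \<and> (\<forall>j<Suc i. mixed_digit j a \<in> des (nth_cover ar C j))"
    using Suc.IH place_value_pos[of i] by (auto simp: mixed_digit_mod_place_value less_Suc_eq)
  finally show ?case .
qed

lemma tfun_cover_prod:
  "tfun (cover_prod ar C i) k xs =
    (\<Sum>j<i. place_value j * tfun (decode_logic j) k (map (mixed_digit j) xs))"
proof (induction i arbitrary: xs)
  case 0
  then show ?case by (simp add: trivial_logic_def)
next
  case (Suc i)
  have "map (mixed_digit j) (map (\<lambda>a. a mod place_value i) xs) = map (mixed_digit j) xs"
    if "j < i" for j
    using mixed_digit_mod_place_value[OF that] by simp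
  then have "tfun (cover_prod ar C i) k (map (\<lambda>a. a mod place_value i) xs)
      = (\<Sum>j<i. place_value j * tfun (decode_logic j) k (map (mixed_digit j) xs))"
    unfolding Suc.IH by (intro sum.cong) (simp_all del: map_map)
  moreover have "(\<lambda>a. a div place_value i mod Suc (fst_decode i)) = mixed_digit i"
    by (simp add: mixed_digit_def fun_eq_iff)
  ultimately show ?case
    by (simp add: prod_logic_simps nv_cover_prod nv_nth_cover tfun_nth_cover)
qed

subsection \<open>Deciding whether a decoded logic is a cover\<close>

fun vars :: "form \<Rightarrow> nat set" where
  "vars (Var x) = {x}"
| "vars (Op k args) = (\<Union>a\<in>set args. vars a)"

lemma finite_vars: "finite (vars F)"
  by (induction F) auto

lemma eval_cong_vars: "(\<And>x. x \<in> vars F \<Longrightarrow> v x = v' x) \<Longrightarrow> eval M v F = eval M v' F"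
proof (induction F)
  case (Op k args)
  then have "map (eval M v) args = map (eval M v') args" by auto
  then show ?case by (simp only: eval.simps)
qed simp

definition calculus_forms :: "calculus \<Rightarrow> form set" where
  "calculus_forms C = set (axioms C) \<union> (\<Union>(ps, c)\<in>set (rules C). insert c (set ps))"

lemma ex_vars_calculus_forms_less: "\<exists>V. \<forall>F\<in>calculus_forms C. \<forall>x\<in>vars F. x < V"
proof -
  have "finite (\<Union>F\<in>calculus_forms C. vars F)"
    unfolding calculus_forms_def by (auto simp: finite_vars)
  then obtain V where "\<forall>x\<in>(\<Union>F\<in>calculus_forms C. vars F). x < V"
    using finite_nat_set_iff_bounded by blast
  then show ?thesis by blast
qed

text \<open>Valuations are coded by list codes, taken modulo the number of values; when only the
  variables below \<open>V\<close> matter, it suffices to consider the codes up to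
  \<open>valuation_code_bound V j\<close>.\<close>

definition code_valuation :: "nat \<Rightarrow> nat \<Rightarrow> nat \<Rightarrow> nat" where
  "code_valuation j u x = nth_code u x mod Suc (fst_decode j)"

definition valuation_code_bound :: "nat \<Rightarrow> nat \<Rightarrow> nat" where
  "valuation_code_bound V j = list_encode (replicate V (fst_decode j))"

definition cover_condition :: "calculus \<Rightarrow> nat \<Rightarrow> nat \<Rightarrow> bool" where
  "cover_condition C j u \<longleftrightarrow>
     (\<forall>A\<in>set (axioms C). satisfies (decode_logic j) (code_valuation j u) A) \<and>
     (\<forall>r\<in>set (rules C). (\<forall>p\<in>set (fst r). satisfies (decode_logic j) (code_valuation j u) p) \<longrightarrow>
        satisfies (decode_logic j) (code_valuation j u) (snd r))"

definition cover_test :: "nat \<Rightarrow> calculus \<Rightarrow> nat \<Rightarrow> bool" where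
  "cover_test V C j \<longleftrightarrow> (\<forall>u<Suc (valuation_code_bound V j). cover_condition C j u)"

lemma valuation_code_valuation: "valuation (decode_logic j) (code_valuation j u)"
  by (simp add: valuation_def decode_logic_simps code_valuation_def)

lemma prod_encode_mono: "a \<le> c \<Longrightarrow> b \<le> d \<Longrightarrow> prod_encode (a, b) \<le> prod_encode (c, d)"
  unfolding prod_encode_def using triangle_mono[of "a + b" "c + d"] by simp

lemma list_encode_mono: "list_all2 (\<le>) xs ys \<Longrightarrow> list_encode xs \<le> list_encode ys"
  by (induction rule: list_all2_induct) (simp_all add: prod_encode_mono)

lemma code_of_valuation:
  fixes V :: nat
  assumes v: "valuation (decode_logic j) v"
  defines "u \<equiv> list_encode (map v [0..<V])"
  shows "u < Suc (valuation_code_bound V j)"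
    and "x < V \<Longrightarrow> code_valuation j u x = v x"
proof -
  have "list_all2 (\<le>) (map v [0..<V]) (replicate V (fst_decode j))"
    using v by (auto simp: list_all2_conv_all_nth valuation_def decode_logic_simps less_Suc_eq_le)
  then show "u < Suc (valuation_code_bound V j)"
    unfolding u_def valuation_code_bound_def by (simp add: list_encode_mono le_imp_less_Suc)
  show "code_valuation j u x = v x" if "x < V"
    using v that
    by (simp add: u_def code_valuation_def nth_code_list_encode valuation_def decode_logic_simps)
qed

lemma is_cover_decode_logic_iff:
  assumes C: "wf_calculus ar C" and V: "\<forall>F\<in>calculus_forms C. \<forall>x\<in>vars F. x < V"
  shows "is_cover ar (decode_logic j) C \<longleftrightarrow> cover_test V C j"
proof
  assume cover: "is_cover ar (decode_logic j) C"
  show "cover_test V C j" unfolding cover_test_def cover_condition_def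
  proof (intro allI impI conjI ballI)
    fix u A assume "A \<in> set (axioms C)"
    with cover show "satisfies (decode_logic j) (code_valuation j u) A"
      using valuation_code_valuation unfolding is_cover_iff Taut_def by blast
  next
    fix u r assume "r \<in> set (rules C)"
      and "\<forall>p\<in>set (fst r). satisfies (decode_logic j) (code_valuation j u) p"
    with cover show "satisfies (decode_logic j) (code_valuation j u) (snd r)"
      using valuation_code_valuation unfolding is_cover_iff by (metis prod.collapse)
  qed
next
  assume test: "cover_test V C j"
  \<comment> \<open>Each valuation agrees on the variables of the calculus with one coded below the bound.\<close>
  have coded: "\<exists>u. cover_condition C j u \<and> (\<forall>F\<in>calculus_forms C.
      satisfies (decode_logic j) v F \<longleftrightarrow> satisfies (decode_logic j) (code_valuation j u) F)"
    if v: "valuation (decode_logic j) v" for v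
  proof (intro exI conjI ballI)
    let ?u = "list_encode (map v [0..<V])"
    show "cover_condition C j ?u"
      using test code_of_valuation(1)[OF v] by (simp add: cover_test_def)
    fix F assume "F \<in> calculus_forms C"
    then have "eval (decode_logic j) (code_valuation j ?u) F = eval (decode_logic j) v F"
      using V code_of_valuation(2)[OF v] by (intro eval_cong_vars) auto
    then show "satisfies (decode_logic j) v F \<longleftrightarrow> satisfies (decode_logic j) (code_valuation j ?u) F"
      by (simp add: satisfies_def)
  qed
  show "is_cover ar (decode_logic j) C" unfolding is_cover_iff
  proof (intro conjI ballI allI impI)
    fix A assume A: "A \<in> set (axioms C)"
    then have "A \<in> calculus_forms C" by (simp add: calculus_forms_def)
    with A coded have "satisfies (decode_logic j) v A" if "valuation (decode_logic j) v" for v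
      using that unfolding cover_condition_def by blast
    with A C show "A \<in> Taut ar (decode_logic j)"
      unfolding Taut_def formulas_def wf_calculus_def by blast
  next
    fix ps c v assume r: "(ps, c) \<in> set (rules C)" and v: "valuation (decode_logic j) v"
      and ps: "\<forall>p\<in>set ps. satisfies (decode_logic j) v p"
    have forms: "c \<in> calculus_forms C" "set ps \<subseteq> calculus_forms C"
      using r by (force simp: calculus_forms_def)+
    obtain u where "cover_condition C j u" and eq: "\<forall>F\<in>calculus_forms C.
        satisfies (decode_logic j) v F \<longleftrightarrow> satisfies (decode_logic j) (code_valuation j u) F"
      using coded[OF v] by blast
    then have "(\<forall>p\<in>set ps. satisfies (decode_logic j) (code_valuation j u) p) \<longrightarrow>
        satisfies (decode_logic j) (code_valuation j u) c"
      using r unfolding cover_condition_def by fastforce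
    with ps eq forms show "satisfies (decode_logic j) v c" by blast
  qed
qed

lemma computable_place_value: "computable place_value"
proof -
  have "computable (\<lambda>x. rec_nat 1 (\<lambda>k r. (\<lambda>p. snd_decode (snd_decode p)
      * Suc (fst_decode (fst_decode (snd_decode p)))) (prod_encode (x, prod_encode (k, r)))) x)"
    by (intro computable_rec_nat computable_const computable_id computable_mult
        computable_snd_decode computable_Suc computable_fst_decode)
  moreover have "rec_nat 1 (\<lambda>k r. r * Suc (fst_decode k)) i = place_value i" for i
    by (induction i) (simp_all add: place_value_def)
  ultimately show ?thesis by simp
qed

lemma computable_mixed_digit:
  "computable f \<Longrightarrow> computable g \<Longrightarrow> computable (\<lambda>x. mixed_digit (f x) (g x))"
  unfolding mixed_digit_def
  by (intro computable_mod computable_div computable_comp[OF computable_place_value]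
      computable_Suc computable_fst_decode)

lemma computable2_eval_decode_logic:
  "computable2 (\<lambda>j u. eval (decode_logic j) (code_valuation j u) F)"
  unfolding computable2_def
proof (induction F)
  case (Var x)
  show ?case unfolding eval.simps code_valuation_def
    by (intro computable_mod computable_nth_code computable_snd_decode computable_fst_decode
        computable_Suc computable_id computable_const)
next
  case (Op k args)
  have "computable (\<lambda>p. list_encode (map (\<lambda>a. eval (decode_logic (fst_decode p))
      (code_valuation (fst_decode p) (snd_decode p)) a) args))"
    using Op.IH by (rule computable_list_encode_map)
  then show ?case unfolding eval.simps decode_logic_simps
    by (intro computable_mod computable_nth_code computable_snd_decode computable_fst_decode
        computable_prod_encode computable_Suc computable_id computable_const)
qed

lemma decidable2_satisfies_decode_logic:
  "decidable2 (\<lambda>j u. satisfies (decode_logic j) (code_valuation j u) F)"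
  using computable2_eval_decode_logic[of F] unfolding decidable2_def computable2_def
    satisfies_def decode_logic_simps mem_Collect_eq
  by (intro decidable_and decidable_less decidable_not decidable_eq computable_nth_code
      computable_fst_decode computable_snd_decode computable_Suc computable_id computable_const)

lemma decidable_cover_test: "decidable (cover_test V C)"
proof -
  have "decidable2 (cover_condition C)"
    unfolding cover_condition_def decidable2_def
    by (intro decidable_and decidable_imp decidable_Ball_set
        decidable2_satisfies_decode_logic[unfolded decidable2_def])
  moreover have "computable (\<lambda>j. list_encode (map (\<lambda>l. fst_decode j) [0..<V]))"
    by (rule computable_list_encode_upt)
      (simp_all add: computable2_def computable_fst_decode computable_id computable_const)
  then have "computable (valuation_code_bound V)"
    by (simp add: valuation_code_bound_def[abs_def] map_replicate_const)
  ultimately have "decidable (\<lambda>j. \<forall>u<Suc (valuation_code_bound V j). cover_condition C j u)"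
    by (intro decidable_all_less computable_Suc)
  then show ?thesis unfolding cover_test_def[abs_def] .
qed

lemma decidable2_des_cover_prod:
  assumes C: "wf_calculus ar C"
  shows "decidable2 (\<lambda>i a. a \<in> des (cover_prod ar C i))"
proof -
  obtain V where V: "\<forall>F\<in>calculus_forms C. \<forall>x\<in>vars F. x < V"
    using ex_vars_calculus_forms_less by blast
  have "x \<in> des (nth_cover ar C j) \<longleftrightarrow>
    (cover_test V C j \<longrightarrow> nth_code (fst_decode (snd_decode j)) x \<noteq> 0)"
    if "x < Suc (fst_decode j)" for x j
    using that is_cover_decode_logic_iff[OF C V]
    by (simp add: nth_cover_def all_designated_def decode_logic_simps)
  then have "a \<in> des (cover_prod ar C i) \<longleftrightarrow> a < place_value i \<and>
      (\<forall>j<i. cover_test V C j \<longrightarrow> nth_code (fst_decode (snd_decode j)) (mixed_digit j a) \<noteq> 0)" for i a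
    by (simp add: des_cover_prod mixed_digit_def)
  moreover have "decidable2 (\<lambda>i a. a < place_value i \<and>
      (\<forall>j<i. cover_test V C j \<longrightarrow> nth_code (fst_decode (snd_decode j)) (mixed_digit j a) \<noteq> 0))"
    unfolding decidable2_def
    by (intro decidable_and decidable_less decidable_all_less[unfolded decidable2_def] decidable_imp
        decidable_comp[OF decidable_cover_test] decidable_not decidable_eq computable_nth_code
        computable_mixed_digit computable_comp[OF computable_place_value] computable_fst_decode
        computable_snd_decode computable_id computable_const)
  ultimately show ?thesis by simp
qed

lemma computable2_tfun_cover_prod:
  "computable2 (\<lambda>i q. tfun (cover_prod ar C i) k (nth_tuple (place_value i) (ar ! k) q))"
  unfolding computable2_def tfun_cover_prod decode_logic_simps nth_tuple_def map_map comp_def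
  by (intro computable_sum[unfolded computable2_def] computable_mult computable_mod
      computable_nth_code computable_prod_encode computable_list_encode_upt[unfolded computable2_def]
      computable_mixed_digit
      computable_div computable_power computable_diff computable_comp[OF computable_place_value]
      computable_Suc computable_fst_decode computable_snd_decode computable_id computable_const)

lemma effective_seqI:
  assumes "computable (\<lambda>i. logic_code ar (Ms i))"
  shows "effective_seq ar Ms"
proof -
  obtain f where f: "\<forall>xs. length xs = 1 \<longrightarrow> rec_eval f xs (logic_code ar (Ms (xs ! 0)))"
    using assms unfolding computable_def recursive_def by blast
  have "rec_eval f [i] (logic_code ar (Ms i))" for i using f[rule_format, of "[i]"] by simp
  then show ?thesis unfolding effective_seq_def by blast
qed

lemma effective_seq_cover_prod:
  assumes "wf_calculus ar C"
  shows "effective_seq ar (cover_prod ar C)"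
proof (intro effective_seqI computable_logic_code)
  show "0 < nv (cover_prod ar C i)" for i by (simp add: nv_cover_prod place_value_pos)
  show "computable (\<lambda>i. nv (cover_prod ar C i))"
    using computable_place_value by (simp add: nv_cover_prod)
  show "decidable2 (\<lambda>i a. a \<in> des (cover_prod ar C i))"
    by (rule decidable2_des_cover_prod[OF assms])
  show "computable2 (\<lambda>i q.
      tfun (cover_prod ar C i) k (nth_tuple (nv (cover_prod ar C i)) (ar ! k) q))" for k
    unfolding nv_cover_prod by (rule computable2_tfun_cover_prod)
qed

theorem proposition9:
  fixes ar :: "nat list" and C :: calculus
  assumes "wf_calculus ar C"
  shows "\<exists>Ms. seq_approx ar (MC ar C) Ms \<and> effective_seq ar Ms"
  using seq_approx_cover_prod[OF assms] effective_seq_cover_prod[OF assms] by blast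

end
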